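(* Let $\mathbf{L}=(L,\le)$ be a finite nontrivial join-semilattice with greatest element $1$ and let $(R,\vee,\circ)$ be a subsemiring of $(\mathrm{JM}(\mathbf{L}),\vee,\circ)$ such that $k_a\in R$ for all $a\in L$, every $f\in R$ satisfies $k_a\le f$ for some $a\in L$, and for all $a\in L$, $b\in L\setminus\{1\}$ there exists $f\in R$ with $f(x)=b$ for $x\le a$ and $f(x)>b$ otherwise. Then $(R,\vee)$ has a neutral element if and only if $\mathbf{L}$ is a lattice. If this neutral element exists, it is left but not right absorbing in $(R,\vee,\circ)$.
   Context: $\mathrm{JM}(\mathbf{L})$ is the set of maps $L\to L$ preserving binary joins, a semiring under pointwise join and composition, ordered pointwise; $k_a$ is the constant map with value $a$. A finite join-semilattice is a lattice iff it has a least element. An element $r$ is right absorbing if $s\circ r=r$ for all $s\in R$, left absorbing if $r\circ s=r$ for all $s\in R$. *)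

theory Defs
  imports Main
begin

text \<open>Join-preserving self-maps of a join-semilattice: the carrier of JM(L).
  The semiring operations are pointwise join (HOL's sup on functions) and composition.\<close>
definition JM :: "('a::semilattice_sup \<Rightarrow> 'a) set" where
  "JM = {f. \<forall>x y. f (sup x y) = sup (f x) (f y)}"

definition subsemiring_JM :: "('a::semilattice_sup \<Rightarrow> 'a) set \<Rightarrow> bool" where
  "subsemiring_JM R \<longleftrightarrow> R \<subseteq> JM \<and> (\<forall>f\<in>R. \<forall>g\<in>R. sup f g \<in> R \<and> f \<circ> g \<in> R)"

definition kconst :: "'a \<Rightarrow> 'a \<Rightarrow> 'a" where
  "kconst a = (\<lambda>_. a)"

definition join_neutral :: "('a::semilattice_sup \<Rightarrow> 'a) set \<Rightarrow> ('a \<Rightarrow> 'a) \<Rightarrow> bool" where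
  "join_neutral R e \<longleftrightarrow> e \<in> R \<and> (\<forall>f\<in>R. sup e f = f \<and> sup f e = f)"

definition right_absorbing :: "('a \<Rightarrow> 'a) set \<Rightarrow> ('a \<Rightarrow> 'a) \<Rightarrow> bool" where
  "right_absorbing R r \<longleftrightarrow> (\<forall>s\<in>R. s \<circ> r = r)"

definition left_absorbing :: "('a \<Rightarrow> 'a) set \<Rightarrow> ('a \<Rightarrow> 'a) \<Rightarrow> bool" where
  "left_absorbing R r \<longleftrightarrow> (\<forall>s\<in>R. r \<circ> s = r)"

text \<open>The poset is a lattice: every pair of elements has a greatest lower bound
  (least upper bounds exist by the join-semilattice structure).\<close>
definition is_lattice :: "'a::order set \<Rightarrow> bool" where
  "is_lattice L \<longleftrightarrow> (\<forall>x\<in>L. \<forall>y\<in>L. \<exists>m\<in>L. m \<le> x \<and> m \<le> y \<and> (\<forall>z\<in>L. z \<le> x \<and> z \<le> y \<longrightarrow> z \<le> m))"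

end

theory Submission
  imports Defs
begin

text \<open>Since all constant maps lie in \<open>R\<close>, a neutral element of \<open>(R, \<or>)\<close> lies below every
  constant map, so it is the constant map at a least element of \<open>L\<close>; conversely that constant
  map is neutral. A finite join-semilattice with a least element is a lattice (the meet of
  \<open>x\<close> and \<open>y\<close> is the join of their finitely many, nonempty set of lower bounds). A constant
  map is left absorbing, and it is not right absorbing since \<open>k\<^sub>1 \<circ> k\<^sub>0 = k\<^sub>1 \<noteq> k\<^sub>0\<close>.\<close>

lemma finite_least_imp_is_lattice:
  fixes z :: "'a::{semilattice_sup, finite}"
  assumes least: "\<And>a. z \<le> a"
  shows "is_lattice (UNIV :: 'a set)"
  unfolding is_lattice_def
proof (intro ballI)
  fix x y :: 'a
  let ?lower = "{w. w \<le> x \<and> w \<le> y}"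
  have "z \<in> ?lower" using least by simp
  then obtain m where m_lower: "m \<in> ?lower" and m_maximal: "\<And>w. w \<in> ?lower \<Longrightarrow> m \<le> w \<Longrightarrow> m = w"
    using finite_has_maximal2[of ?lower z] by auto
  have "w \<le> m" if "w \<in> ?lower" for w
  proof -
    have "sup m w \<in> ?lower" using m_lower that by simp
    then have "m = sup m w" using m_maximal by simp
    then show ?thesis by (metis sup.cobounded2)
  qed
  then show "\<exists>m\<in>UNIV. m \<le> x \<and> m \<le> y \<and> (\<forall>w\<in>UNIV. w \<le> x \<and> w \<le> y \<longrightarrow> w \<le> m)"
    using m_lower by auto
qed

lemma is_lattice_imp_least:
  assumes "is_lattice (UNIV :: 'a set)"
  obtains z :: "'a::{order, finite}" where "\<And>a. z \<le> a"
proof -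
  obtain m :: 'a where m_minimal: "\<And>b. b \<le> m \<Longrightarrow> m = b"
    using finite_has_minimal[of "UNIV :: 'a set"] by auto
  have "m \<le> a" for a
  proof -
    obtain g where "g \<le> m" "g \<le> a" using assms unfolding is_lattice_def by blast
    then show ?thesis using m_minimal by metis
  qed
  then show ?thesis using that by blast
qed

lemma join_neutral_le_kconst:
  assumes "join_neutral R e" "kconst a \<in> R"
  shows "e \<le> kconst a"
proof -
  have "sup e (kconst a) = kconst a" using assms unfolding join_neutral_def by blast
  then show ?thesis by (metis sup.orderI sup_commute)
qed

lemma join_neutral_eq_kconst_least:
  fixes R :: "('a::semilattice_sup \<Rightarrow> 'a) set"
  assumes neutral: "join_neutral R e" and const_in: "\<And>a. kconst a \<in> R"
  obtains z where "\<And>a. z \<le> a" and "e = kconst z"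
proof -
  have e_le: "e x \<le> a" for x a
    using join_neutral_le_kconst[OF neutral const_in] by (simp add: le_fun_def kconst_def)
  then have "e = kconst (e undefined)"
    by (auto simp: fun_eq_iff kconst_def intro: order.antisym)
  then show ?thesis using that e_le by blast
qed

lemma join_neutral_kconst_least:
  assumes least: "\<And>a. z \<le> a" and "kconst z \<in> R"
  shows "join_neutral R (kconst z)"
  unfolding join_neutral_def
proof (intro conjI ballI)
  show "kconst z \<in> R" by fact
  fix f
  have "kconst z \<le> f" using least by (simp add: le_fun_def kconst_def)
  then show "sup (kconst z) f = f" "sup f (kconst z) = f"
    by (simp_all add: sup.absorb2 sup.absorb1)
qed

lemma left_absorbing_kconst: "left_absorbing R (kconst a)"
  by (simp add: left_absorbing_def kconst_def comp_def)

lemma not_right_absorbing_kconst: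
  assumes "kconst b \<in> R" "b \<noteq> a"
  shows "\<not> right_absorbing R (kconst a)"
  using assms by (auto simp: right_absorbing_def kconst_def comp_def fun_eq_iff)

theorem proposition7p2:
  fixes R :: "('a::{semilattice_sup, order_top, finite} \<Rightarrow> 'a) set"
  assumes nontriv: "\<exists>x y::'a. x \<noteq> y"
    and sub: "subsemiring_JM R"
    and const_in: "\<forall>a. kconst a \<in> R"
    and above_const: "\<forall>f\<in>R. \<exists>a. kconst a \<le> f"
    and sep: "\<forall>a. \<forall>b. b \<noteq> top \<longrightarrow>
               (\<exists>f\<in>R. \<forall>x. (x \<le> a \<longrightarrow> f x = b) \<and> (\<not> x \<le> a \<longrightarrow> f x > b))"
  shows "((\<exists>e. join_neutral R e) \<longleftrightarrow> is_lattice (UNIV :: 'a set))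
         \<and> (\<forall>e. join_neutral R e \<longrightarrow> left_absorbing R e \<and> \<not> right_absorbing R e)"
proof (intro conjI allI impI iffI)
  assume "\<exists>e. join_neutral R e"
  then obtain e where "join_neutral R e" by blast
  then obtain z :: 'a where "\<And>a. z \<le> a" using join_neutral_eq_kconst_least const_in by blast
  then show "is_lattice (UNIV :: 'a set)" by (rule finite_least_imp_is_lattice)
next
  assume "is_lattice (UNIV :: 'a set)"
  then obtain z :: 'a where "\<And>a. z \<le> a" using is_lattice_imp_least by blast
  then show "\<exists>e. join_neutral R e" using join_neutral_kconst_least const_in by blast
next
  fix e assume "join_neutral R e"
  then obtain z :: 'a where least: "\<And>a. z \<le> a" and e_def: "e = kconst z"
    using join_neutral_eq_kconst_least const_in by blast
  have "z \<noteq> top"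
    using nontriv least by (metis top_unique)
  then show "left_absorbing R e" "\<not> right_absorbing R e"
    unfolding e_def using left_absorbing_kconst not_right_absorbing_kconst const_in by metis+
qed

end
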